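(* Let $R$ be a finite Frobenius ring, $\chi$ a generating character of $R$, $M=\{x_0=0,x_1,\ldots,x_n\}$ a finite $R$-bimodule, and $B,B'$ non-degenerate bilinear forms on $M$. Then the matrices $H=[\chi(B(x_i,x_j))]_{0\le i,j\le n}$ and $H'=[\chi(B'(x_i,x_j))]_{0\le i,j\le n}$ are equivalent by a row permutation, i.e. $H'$ is obtained from $H$ by permuting its rows.
   Context: A bilinear form on $M$ is a biadditive map $B:M\times M\to R$ with $B(rx,y)=rB(x,y)$ and $B(x,yr)=B(x,y)r$; it is non-degenerate if its left and right kernels are zero. A character of $R$ is a group homomorphism $(R,+)\to\mathbb{C}^*$; it is generating if its kernel contains no nonzero left ideal and no nonzero right ideal of $R$. *)

theory Defs
  imports Complex_Main
begin

definition left_ideal :: "'r::ring_1 set \<Rightarrow> bool" where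
  "left_ideal I \<longleftrightarrow> 0 \<in> I \<and> (\<forall>a\<in>I. \<forall>b\<in>I. a + b \<in> I) \<and> (\<forall>a\<in>I. - a \<in> I)
     \<and> (\<forall>r. \<forall>a\<in>I. r * a \<in> I)"

definition right_ideal :: "'r::ring_1 set \<Rightarrow> bool" where
  "right_ideal I \<longleftrightarrow> 0 \<in> I \<and> (\<forall>a\<in>I. \<forall>b\<in>I. a + b \<in> I) \<and> (\<forall>a\<in>I. - a \<in> I)
     \<and> (\<forall>r. \<forall>a\<in>I. a * r \<in> I)"

definition character :: "('r::ring_1 \<Rightarrow> complex) \<Rightarrow> bool" where
  "character \<chi> \<longleftrightarrow> (\<forall>a. \<chi> a \<noteq> 0) \<and> (\<forall>a b. \<chi> (a + b) = \<chi> a * \<chi> b)"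

definition generating_character :: "('r::ring_1 \<Rightarrow> complex) \<Rightarrow> bool" where
  "generating_character \<chi> \<longleftrightarrow> character \<chi> \<and>
     (\<forall>I. left_ideal I \<and> I \<subseteq> {a. \<chi> a = 1} \<longrightarrow> I = {0}) \<and>
     (\<forall>I. right_ideal I \<and> I \<subseteq> {a. \<chi> a = 1} \<longrightarrow> I = {0})"

text \<open>A finite ring is Frobenius iff it admits a generating character (Wood);
we use this characterization for finite rings.\<close>
definition finite_frobenius_ring :: "'r::ring_1 itself \<Rightarrow> bool" where
  "finite_frobenius_ring _ \<longleftrightarrow> finite (UNIV :: 'r set) \<and>
     (\<exists>\<chi> :: 'r \<Rightarrow> complex. generating_character \<chi>)"

definition bimodule :: "('r::ring_1 \<Rightarrow> 'm::ab_group_add \<Rightarrow> 'm) \<Rightarrow> ('m \<Rightarrow> 'r \<Rightarrow> 'm) \<Rightarrow> bool" where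
  "bimodule lm rm \<longleftrightarrow>
     (\<forall>r x y. lm r (x + y) = lm r x + lm r y) \<and>
     (\<forall>r s x. lm (r + s) x = lm r x + lm s x) \<and>
     (\<forall>r s x. lm (r * s) x = lm r (lm s x)) \<and>
     (\<forall>x. lm 1 x = x) \<and>
     (\<forall>r x y. rm (x + y) r = rm x r + rm y r) \<and>
     (\<forall>r s x. rm x (r + s) = rm x r + rm x s) \<and>
     (\<forall>r s x. rm x (r * s) = rm (rm x r) s) \<and>
     (\<forall>x. rm x 1 = x) \<and>
     (\<forall>r s x. rm (lm r x) s = lm r (rm x s))"

definition bilinear_form ::
  "('r::ring_1 \<Rightarrow> 'm::ab_group_add \<Rightarrow> 'm) \<Rightarrow> ('m \<Rightarrow> 'r \<Rightarrow> 'm) \<Rightarrow> ('m \<Rightarrow> 'm \<Rightarrow> 'r) \<Rightarrow> bool" where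
  "bilinear_form lm rm B \<longleftrightarrow>
     (\<forall>x x' y. B (x + x') y = B x y + B x' y) \<and>
     (\<forall>x y y'. B x (y + y') = B x y + B x y') \<and>
     (\<forall>r x y. B (lm r x) y = r * B x y) \<and>
     (\<forall>r x y. B x (rm y r) = B x y * r)"

definition nondegenerate :: "('m::ab_group_add \<Rightarrow> 'm \<Rightarrow> 'r::ring_1) \<Rightarrow> bool" where
  "nondegenerate B \<longleftrightarrow> {x. \<forall>y. B x y = 0} = {0} \<and> {y. \<forall>x. B x y = 0} = {0}"

end

theory Submission
  imports Defs
begin

text \<open>Non-degeneracy of B together with the generating property
says that the characters y \<mapsto> \<chi> (B v y), v \<in> M, are pairwise distinct, and an orthogonality
argument shows that they exhaust all characters of (M,+). Hence every row y \<mapsto> \<chi> (B' u y)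
equals exactly one row y \<mapsto> \<chi> (B v y), and u \<mapsto> v is injective, so a bijection of the finite
set M.\<close>

lemma sum_nontrivial_hom_eq_0:
  fixes f :: "'a::ab_group_add \<Rightarrow> complex"
  assumes "finite (UNIV :: 'a set)" and hom: "\<And>a b. f (a + b) = f a * f b" and "f a \<noteq> 1"
  shows "(\<Sum>y\<in>UNIV. f y) = 0"
proof -
  have "(\<Sum>y\<in>UNIV. f y) = (\<Sum>y\<in>UNIV. f (a + y))"
    by (rule sum.reindex_bij_witness[where i="\<lambda>y. a + y" and j="\<lambda>y. y - a"]) auto
  also have "\<dots> = f a * (\<Sum>y\<in>UNIV. f y)" by (simp add: hom sum_distrib_left)
  finally have "(1 - f a) * (\<Sum>y\<in>UNIV. f y) = 0" by (simp add: algebra_simps)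
  with \<open>f a \<noteq> 1\<close> show ?thesis by simp
qed

lemma character_add: "character \<chi> \<Longrightarrow> \<chi> (a + b) = \<chi> a * \<chi> b"
  unfolding character_def by blast

lemma character_0:
  assumes "character \<chi>" shows "\<chi> 0 = 1"
proof -
  have "\<chi> 0 = \<chi> 0 * \<chi> 0" using character_add[OF assms, of 0 0] by simp
  moreover have "\<chi> 0 \<noteq> 0" using assms unfolding character_def by blast
  ultimately show ?thesis by simp
qed

lemma character_uminus_mult:
  assumes "character \<chi>" shows "\<chi> (- a) * \<chi> a = 1"
  using character_add[OF assms, of "- a" a] character_0[OF assms] by simp

lemma generating_character_character: "generating_character \<chi> \<Longrightarrow> character \<chi>"
  unfolding generating_character_def by blast

lemma additive_bilinear_form_left: "bilinear_form lm rm B \<Longrightarrow> additive (\<lambda>x. B x y)"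
  unfolding bilinear_form_def additive_def by blast

lemma additive_bilinear_form_right: "bilinear_form lm rm B \<Longrightarrow> additive (B x)"
  unfolding bilinear_form_def additive_def by blast

lemma right_ideal_range_bilinear_form:
  assumes "bilinear_form lm rm B" shows "right_ideal (range (B x))"
proof -
  interpret additive "B x" using additive_bilinear_form_right[OF assms] .
  have "B x y * r = B x (rm y r)" for y r using assms unfolding bilinear_form_def by simp
  then show ?thesis unfolding right_ideal_def by (auto simp flip: zero add minus)
qed

lemma left_ideal_range_bilinear_form:
  assumes "bilinear_form lm rm B" shows "left_ideal (range (\<lambda>x. B x y))"
proof -
  interpret additive "\<lambda>x. B x y" using additive_bilinear_form_left[OF assms] .
  have "r * B x y = B (lm r x) y" for x r using assms unfolding bilinear_form_def by simp
  then show ?thesis unfolding left_ideal_def by (auto simp flip: zero add minus)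
qed

lemma generating_character_left_kernel:
  assumes "generating_character \<chi>" "bilinear_form lm rm B" "nondegenerate B"
    and "\<And>y. \<chi> (B x y) = 1"
  shows "x = 0"
proof -
  have "range (B x) = {0}"
    using assms(1,4) right_ideal_range_bilinear_form[OF assms(2)]
    unfolding generating_character_def by blast
  then have "\<forall>y. B x y = 0" by auto
  then show ?thesis using assms(3) unfolding nondegenerate_def by blast
qed

lemma generating_character_right_kernel:
  assumes "generating_character \<chi>" "bilinear_form lm rm B" "nondegenerate B"
    and "\<And>x. \<chi> (B x y) = 1"
  shows "y = 0"
proof -
  have "range (\<lambda>x. B x y) = {0}"
    using assms(1,4) left_ideal_range_bilinear_form[OF assms(2)]
    unfolding generating_character_def by blast
  then have "\<forall>x. B x y = 0" by auto
  then show ?thesis using assms(3) unfolding nondegenerate_def by blast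
qed

lemma sum_generating_character_bilinear_form:
  fixes B :: "'m::ab_group_add \<Rightarrow> 'm \<Rightarrow> 'r::ring_1"
  assumes "generating_character \<chi>" "bilinear_form lm rm B" "nondegenerate B"
    and "finite (UNIV :: 'm set)"
  shows "(\<Sum>x\<in>UNIV. \<chi> (B x y)) = (if y = 0 then of_nat (card (UNIV :: 'm set)) else 0)"
proof -
  interpret additive "\<lambda>x. B x y" using additive_bilinear_form_left[OF assms(2)] .
  have \<chi>: "character \<chi>" using generating_character_character[OF assms(1)] .
  show ?thesis
  proof (cases "y = 0")
    case True
    then show ?thesis using additive.zero[OF additive_bilinear_form_right[OF assms(2)]]
      by (simp add: character_0[OF \<chi>])
  next
    case False
    then obtain x where "\<chi> (B x y) \<noteq> 1"
      using generating_character_right_kernel[OF assms(1-3)] by blast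
    then show ?thesis
      using False sum_nontrivial_hom_eq_0[OF assms(4), of "\<lambda>x. \<chi> (B x y)"]
      by (simp add: add character_add[OF \<chi>])
  qed
qed

text \<open>If \<psi> differed from every \<chi> \<circ> B v, each inner sum of
  \<Sum>v. \<Sum>y. \<psi> y \<chi> (B v (- y)) would vanish; summing over v first instead leaves \<psi> 0 |M| \<noteq> 0.\<close>

lemma additive_character_eq_generating_character_bilinear_form:
  fixes \<psi> :: "'m::ab_group_add \<Rightarrow> complex"
  assumes gen: "generating_character \<chi>" and bil: "bilinear_form lm rm B" and "nondegenerate B"
    and fin: "finite (UNIV :: 'm set)"
    and hom: "\<And>a b. \<psi> (a + b) = \<psi> a * \<psi> b" and "\<psi> 0 = 1"
  shows "\<exists>v. \<forall>y. \<psi> y = \<chi> (B v y)"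
proof (rule ccontr)
  assume no_rep: "\<not> ?thesis"
  have \<chi>: "character \<chi>" using generating_character_character[OF gen] .
  have inner_sum: "(\<Sum>y\<in>UNIV. \<psi> y * \<chi> (B v (- y))) = 0" for v
  proof -
    interpret additive "B v" using additive_bilinear_form_right[OF bil] .
    obtain y where y: "\<psi> y \<noteq> \<chi> (B v y)" using no_rep by auto
    have "\<psi> y * \<chi> (B v (- y)) \<noteq> 1"
    proof
      assume "\<psi> y * \<chi> (B v (- y)) = 1"
      then have "\<psi> y * (\<chi> (B v (- y)) * \<chi> (B v y)) = \<chi> (B v y)" by (simp add: mult.assoc)
      with y show False by (simp add: minus character_uminus_mult[OF \<chi>])
    qed
    moreover have "\<psi> (a + c) * \<chi> (B v (- (a + c))) = \<psi> a * \<chi> (B v (- a)) * (\<psi> c * \<chi> (B v (- c)))"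
      for a c using add[of "- a" "- c"] by (simp add: hom character_add[OF \<chi>] mult_ac)
    ultimately show ?thesis
      using sum_nontrivial_hom_eq_0[OF fin, of "\<lambda>y. \<psi> y * \<chi> (B v (- y))"] by blast
  qed
  have "0 = (\<Sum>v\<in>UNIV. \<Sum>y\<in>UNIV. \<psi> y * \<chi> (B v (- y)))" by (simp add: inner_sum)
  also have "\<dots> = (\<Sum>y\<in>UNIV. \<psi> y * (\<Sum>v\<in>UNIV. \<chi> (B v (- y))))"
    by (subst sum.swap) (simp add: sum_distrib_left)
  also have "\<dots> = \<psi> 0 * of_nat (card (UNIV :: 'm set))"
    by (simp add: sum_generating_character_bilinear_form[OF gen bil \<open>nondegenerate B\<close> fin]
        if_distrib sum.delta fin cong: if_cong)
  finally show False using \<open>\<psi> 0 = 1\<close> fin by (simp add: card_gt_0_iff)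
qed

lemma exists_bij_generating_character_bilinear_forms:
  fixes B B' :: "'m::ab_group_add \<Rightarrow> 'm \<Rightarrow> 'r::ring_1"
  assumes gen: "generating_character \<chi>" and fin: "finite (UNIV :: 'm set)"
    and "bilinear_form lm rm B" "nondegenerate B"
    and bil': "bilinear_form lm rm B'" and "nondegenerate B'"
  shows "\<exists>f. bij f \<and> (\<forall>u y. \<chi> (B' u y) = \<chi> (B (f u) y))"
proof -
  have \<chi>: "character \<chi>" using generating_character_character[OF gen] .
  have "\<exists>v. \<forall>y. \<chi> (B' u y) = \<chi> (B v y)" for u
  proof -
    interpret additive "B' u" using additive_bilinear_form_right[OF bil'] .
    show ?thesis
      by (rule additive_character_eq_generating_character_bilinear_form[OF gen assms(3,4) fin])
        (simp_all add: add zero character_add[OF \<chi>] character_0[OF \<chi>])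
  qed
  then obtain f where f: "\<And>u y. \<chi> (B' u y) = \<chi> (B (f u) y)" by metis
  have "inj f"
  proof (rule injI)
    fix u u' assume "f u = f u'"
    have "\<chi> (B' (u - u') y) = 1" for y
    proof -
      interpret additive "\<lambda>u. B' u y" using additive_bilinear_form_left[OF bil'] .
      have "\<chi> (B' (u - u') y) = \<chi> (B' u y) * \<chi> (- B' u' y)"
        by (simp add: diff character_add[OF \<chi>, symmetric])
      also have "\<dots> = \<chi> (- B' u' y) * \<chi> (B' u' y)" using f \<open>f u = f u'\<close> by simp
      finally show ?thesis by (simp add: character_uminus_mult[OF \<chi>])
    qed
    then have "u - u' = 0" by (rule generating_character_left_kernel[OF gen bil' \<open>nondegenerate B'\<close>])
    then show "u = u'" by simp
  qed
  then have "bij f" using fin by (simp add: bij_def finite_UNIV_inj_surj)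
  with f show ?thesis by blast
qed

theorem propositionA2:
  fixes \<chi> :: "'r::ring_1 \<Rightarrow> complex"
    and lm :: "'r \<Rightarrow> 'm::ab_group_add \<Rightarrow> 'm" and rm :: "'m \<Rightarrow> 'r \<Rightarrow> 'm"
    and B B' :: "'m \<Rightarrow> 'm \<Rightarrow> 'r"
    and x :: "nat \<Rightarrow> 'm" and n :: nat
  assumes "finite_frobenius_ring TYPE('r)"
    and "generating_character \<chi>"
    and "finite (UNIV :: 'm set)"
    and "bimodule lm rm"
    and "bij_betw x {0..n} (UNIV :: 'm set)" and "x 0 = 0"
    and "bilinear_form lm rm B" and "nondegenerate B"
    and "bilinear_form lm rm B'" and "nondegenerate B'"
  shows "\<exists>\<sigma>. bij_betw \<sigma> {0..n} {0..n} \<and>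
           (\<forall>i\<in>{0..n}. \<forall>j\<in>{0..n}. \<chi> (B' (x i) (x j)) = \<chi> (B (x (\<sigma> i)) (x j)))"
proof -
  note x = \<open>bij_betw x {0..n} UNIV\<close>
  obtain f where "bij f" and f: "\<And>u y. \<chi> (B' u y) = \<chi> (B (f u) y)"
    using exists_bij_generating_character_bilinear_forms[OF assms(2,3,7-10)] by blast
  define \<sigma> where "\<sigma> = the_inv_into {0..n} x \<circ> (f \<circ> x)"
  have "bij_betw \<sigma> {0..n} {0..n}"
    unfolding \<sigma>_def
    by (rule bij_betw_trans[OF bij_betw_trans[OF x \<open>bij f\<close>] bij_betw_the_inv_into[OF x]])
  moreover have "x (\<sigma> i) = f (x i)" for i
    unfolding \<sigma>_def using f_the_inv_into_f_bij_betw[OF x] by simp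
  ultimately show ?thesis using f by auto
qed

end
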